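(* Let $(X,r)$ be a non-degenerate involutive set-theoretic solution of the Yang–Baxter equation with $|X|=n$, identified with $\{1,\dots,n\}$, and let $(\mathcal{X}^2,\tilde r)$ be the induced pair. Then, for every natural number $k\ge 1$, there exists a non-degenerate involutive set-theoretic solution of size $n^{2^k}$ induced from $(X,r)$, namely the one obtained by applying the construction $(X,r)\mapsto(\mathcal{X}^2,\tilde r)$ iteratively $k$ times. Furthermore: (i) if $(X,r)$ is irretractable, resp. a multipermutation solution of level $\ell$, then $(\mathcal{X}^2,\tilde r)$ is irretractable, resp. a multipermutation solution of level $\ell$; (ii) if $(X,r)$ is decomposable, then $(\mathcal{X}^2,\tilde r)$ is decomposable; (iii) if $(X,r)$ is of class $m$, then $(\mathcal{X}^2,\tilde r)$ is of class $m$. Assume moreover that $(X,r)$ is indecomposable and satisfies condition $(\mathfrak{C})$: there exists a natural number $\ell$ such that for every $1\le s\le n$ there exist $1\le i_1,\dots,i_\ell\le n$ with $\sigma_{i_1}\sigma_{i_2}\cdots\sigma_{i_\ell}(1)=s$. Then $(\mathcal{X}^2,\tilde r)$ is also indecomposable and satisfies condition $(\mathfrak{C})$ (with respect to its own permutations $g_i^k$ and the element $T_1^1$ in place of $1$). Moreover, the process can be repeated iteratively to obtain indecomposable solutions of size $n^{2^k}$ for every natural number $k\ge1$.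
   Context: A set-theoretic solution of the Yang–Baxter equation is a pair $(X,r)$ with $X$ a set and $r:X\times X\to X\times X$, written $r(x,y)=(\sigma_x(y),\gamma_y(x))$, such that $r^{12}r^{23}r^{12}=r^{23}r^{12}r^{23}$ on $X^3$, where $r^{12}=r\times \mathrm{Id}_X$, $r^{23}=\mathrm{Id}_X\times r$. It is non-degenerate if all $\sigma_x,\gamma_x$ are bijections of $X$, and involutive if $r\circ r=\mathrm{Id}_{X\times X}$. For $|X|=n$ we identify $X$ with $\{1,\dots,n\}$, so the $\sigma_i,\gamma_j$ are permutations of $\{1,\dots,n\}$. Induced pair: $\mathcal{X}^2=\{T_i^k: 1\le i,k\le n\}$ is a set of $n^2$ symbols in bijection with $X\times X$, and $\tilde r:\mathcal{X}^2\times\mathcal{X}^2\to\mathcal{X}^2\times\mathcal{X}^2$ is $\tilde r(T_i^k,T_j^l)=(T_{\sigma_i(j)}^{\sigma_k(l)},T_{\gamma_j(i)}^{\gamma_l(k)})$; we write $g_i^k(T_j^l)=T_{\sigma_i(j)}^{\sigma_k(l)}$ and $f_j^l(T_i^k)=T_{\gamma_j(i)}^{\gamma_l(k)}$, so $\tilde r(T_i^k,T_j^l)=(g_i^k(T_j^l),f_j^l(T_i^k))$. A subset $Y\subseteq X$ is invariant if $r(Y\times Y)\subseteq Y\times Y$, and non-degenerate invariant if moreover $(Y,r|_{Y^2})$ is a non-degenerate involutive solution; $(X,r)$ is decomposable if $X$ is the union of two non-empty disjoint non-degenerate invariant subsets, and indecomposable otherwise. Retraction: $x\sim y$ iff $\sigma_x=\sigma_y$;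 $\mathrm{Ret}(X,r)=(X/\!\sim, r')$ with $r'([x],[y])=([\sigma_x(y)],[\gamma_y(x)])$, and $\mathrm{Ret}^k=\mathrm{Ret}(\mathrm{Ret}^{k-1})$. $(X,r)$ is a multipermutation solution of level $\ell$ if $\ell$ is the smallest natural number with $|\mathrm{Ret}^\ell(X,r)|=1$; if such $\ell$ exists $(X,r)$ is retractable, otherwise irretractable. Class: with $D(x)=\sigma_x^{-1}(x)$, $(X,r)$ is of class $m$ if $m$ is the minimal natural number such that $\sigma_x\sigma_{D(x)}\sigma_{D^2(x)}\cdots\sigma_{D^{m-1}(x)}=\mathrm{Id}_X$ for every $x\in X$. *)

theory Defs
  imports Main
begin

text \<open>A map r(x,y) = (sigma_x(y), gamma_y(x)) on a carrier X is encoded by the two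
  families sigma, gamma :: 'a => 'a => 'a (sigma x is the map sigma_x, gamma y is gamma_y).\<close>

definition rmap :: "('a \<Rightarrow> 'a \<Rightarrow> 'a) \<Rightarrow> ('a \<Rightarrow> 'a \<Rightarrow> 'a) \<Rightarrow> 'a \<times> 'a \<Rightarrow> 'a \<times> 'a" where
  "rmap \<sigma> \<gamma> p = (\<sigma> (fst p) (snd p), \<gamma> (snd p) (fst p))"

definition r12 :: "('a \<Rightarrow> 'a \<Rightarrow> 'a) \<Rightarrow> ('a \<Rightarrow> 'a \<Rightarrow> 'a) \<Rightarrow> 'a \<times> 'a \<times> 'a \<Rightarrow> 'a \<times> 'a \<times> 'a" where
  "r12 \<sigma> \<gamma> t = (case t of (x, y, z) \<Rightarrow> (fst (rmap \<sigma> \<gamma> (x, y)), snd (rmap \<sigma> \<gamma> (x, y)), z))"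

definition r23 :: "('a \<Rightarrow> 'a \<Rightarrow> 'a) \<Rightarrow> ('a \<Rightarrow> 'a \<Rightarrow> 'a) \<Rightarrow> 'a \<times> 'a \<times> 'a \<Rightarrow> 'a \<times> 'a \<times> 'a" where
  "r23 \<sigma> \<gamma> t = (case t of (x, y, z) \<Rightarrow> (x, fst (rmap \<sigma> \<gamma> (y, z)), snd (rmap \<sigma> \<gamma> (y, z))))"

definition is_solution :: "'a set \<Rightarrow> ('a \<Rightarrow> 'a \<Rightarrow> 'a) \<Rightarrow> ('a \<Rightarrow> 'a \<Rightarrow> 'a) \<Rightarrow> bool" where
  "is_solution X \<sigma> \<gamma> \<longleftrightarrow>
     (\<forall>x\<in>X. \<forall>y\<in>X. rmap \<sigma> \<gamma> (x, y) \<in> X \<times> X) \<and>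
     (\<forall>x\<in>X. \<forall>y\<in>X. \<forall>z\<in>X.
        r12 \<sigma> \<gamma> (r23 \<sigma> \<gamma> (r12 \<sigma> \<gamma> (x, y, z))) = r23 \<sigma> \<gamma> (r12 \<sigma> \<gamma> (r23 \<sigma> \<gamma> (x, y, z))))"

definition nondegenerate :: "'a set \<Rightarrow> ('a \<Rightarrow> 'a \<Rightarrow> 'a) \<Rightarrow> ('a \<Rightarrow> 'a \<Rightarrow> 'a) \<Rightarrow> bool" where
  "nondegenerate X \<sigma> \<gamma> \<longleftrightarrow> (\<forall>x\<in>X. bij_betw (\<sigma> x) X X \<and> bij_betw (\<gamma> x) X X)"

definition involutive :: "'a set \<Rightarrow> ('a \<Rightarrow> 'a \<Rightarrow> 'a) \<Rightarrow> ('a \<Rightarrow> 'a \<Rightarrow> 'a) \<Rightarrow> bool" where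
  "involutive X \<sigma> \<gamma> \<longleftrightarrow> (\<forall>x\<in>X. \<forall>y\<in>X. rmap \<sigma> \<gamma> (rmap \<sigma> \<gamma> (x, y)) = (x, y))"

definition nd_inv_solution :: "'a set \<Rightarrow> ('a \<Rightarrow> 'a \<Rightarrow> 'a) \<Rightarrow> ('a \<Rightarrow> 'a \<Rightarrow> 'a) \<Rightarrow> bool" where
  "nd_inv_solution X \<sigma> \<gamma> \<longleftrightarrow> is_solution X \<sigma> \<gamma> \<and> nondegenerate X \<sigma> \<gamma> \<and> involutive X \<sigma> \<gamma>"

definition invariant_subset :: "'a set \<Rightarrow> ('a \<Rightarrow> 'a \<Rightarrow> 'a) \<Rightarrow> ('a \<Rightarrow> 'a \<Rightarrow> 'a) \<Rightarrow> 'a set \<Rightarrow> bool" where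
  "invariant_subset X \<sigma> \<gamma> Y \<longleftrightarrow> Y \<subseteq> X \<and> (\<forall>x\<in>Y. \<forall>y\<in>Y. rmap \<sigma> \<gamma> (x, y) \<in> Y \<times> Y)"

text \<open>Y is non-degenerate invariant if it is invariant and the restriction of r to Y x Y
  is a non-degenerate involutive solution (the restriction is represented by the same
  families sigma, gamma, now considered on the carrier Y).\<close>
definition nd_invariant_subset :: "'a set \<Rightarrow> ('a \<Rightarrow> 'a \<Rightarrow> 'a) \<Rightarrow> ('a \<Rightarrow> 'a \<Rightarrow> 'a) \<Rightarrow> 'a set \<Rightarrow> bool" where
  "nd_invariant_subset X \<sigma> \<gamma> Y \<longleftrightarrow> invariant_subset X \<sigma> \<gamma> Y \<and> nd_inv_solution Y \<sigma> \<gamma>"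

definition decomposable :: "'a set \<Rightarrow> ('a \<Rightarrow> 'a \<Rightarrow> 'a) \<Rightarrow> ('a \<Rightarrow> 'a \<Rightarrow> 'a) \<Rightarrow> bool" where
  "decomposable X \<sigma> \<gamma> \<longleftrightarrow> (\<exists>Y Z. Y \<noteq> {} \<and> Z \<noteq> {} \<and> Y \<inter> Z = {} \<and> Y \<union> Z = X \<and>
      nd_invariant_subset X \<sigma> \<gamma> Y \<and> nd_invariant_subset X \<sigma> \<gamma> Z)"

definition indecomposable :: "'a set \<Rightarrow> ('a \<Rightarrow> 'a \<Rightarrow> 'a) \<Rightarrow> ('a \<Rightarrow> 'a \<Rightarrow> 'a) \<Rightarrow> bool" where
  "indecomposable X \<sigma> \<gamma> \<longleftrightarrow> \<not> decomposable X \<sigma> \<gamma>"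

type_synonym 'a sol = "'a set \<times> ('a \<Rightarrow> 'a \<Rightarrow> 'a) \<times> ('a \<Rightarrow> 'a \<Rightarrow> 'a)"

text \<open>The retraction X/~ (x ~ y iff sigma_x = sigma_y) is represented, up to the canonical
  bijection, by a set of chosen representatives of the ~-classes, so that Ret stays in the
  same type and can be iterated. ret_rep X sigma x is the chosen representative of [x].\<close>
definition ret_rep :: "'a set \<Rightarrow> ('a \<Rightarrow> 'a \<Rightarrow> 'a) \<Rightarrow> 'a \<Rightarrow> 'a" where
  "ret_rep X \<sigma> x = (SOME y. y \<in> X \<and> (\<forall>z\<in>X. \<sigma> y z = \<sigma> x z))"

definition Ret :: "'a sol \<Rightarrow> 'a sol" where
  "Ret S = (case S of (X, \<sigma>, \<gamma>) \<Rightarrow>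
     (ret_rep X \<sigma> ` X, (\<lambda>x y. ret_rep X \<sigma> (\<sigma> x y)), (\<lambda>y x. ret_rep X \<sigma> (\<gamma> y x))))"

definition retractable :: "'a set \<Rightarrow> ('a \<Rightarrow> 'a \<Rightarrow> 'a) \<Rightarrow> ('a \<Rightarrow> 'a \<Rightarrow> 'a) \<Rightarrow> bool" where
  "retractable X \<sigma> \<gamma> \<longleftrightarrow> (\<exists>l::nat. card (fst ((Ret ^^ l) (X, \<sigma>, \<gamma>))) = 1)"

definition irretractable :: "'a set \<Rightarrow> ('a \<Rightarrow> 'a \<Rightarrow> 'a) \<Rightarrow> ('a \<Rightarrow> 'a \<Rightarrow> 'a) \<Rightarrow> bool" where
  "irretractable X \<sigma> \<gamma> \<longleftrightarrow> \<not> retractable X \<sigma> \<gamma>"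

definition mp_level :: "'a set \<Rightarrow> ('a \<Rightarrow> 'a \<Rightarrow> 'a) \<Rightarrow> ('a \<Rightarrow> 'a \<Rightarrow> 'a) \<Rightarrow> nat \<Rightarrow> bool" where
  "mp_level X \<sigma> \<gamma> l \<longleftrightarrow> card (fst ((Ret ^^ l) (X, \<sigma>, \<gamma>))) = 1 \<and>
      (\<forall>j<l. card (fst ((Ret ^^ j) (X, \<sigma>, \<gamma>))) \<noteq> 1)"

definition Dmap :: "'a set \<Rightarrow> ('a \<Rightarrow> 'a \<Rightarrow> 'a) \<Rightarrow> 'a \<Rightarrow> 'a" where
  "Dmap X \<sigma> x = inv_into X (\<sigma> x) x"

fun sigma_prod :: "'a set \<Rightarrow> ('a \<Rightarrow> 'a \<Rightarrow> 'a) \<Rightarrow> nat \<Rightarrow> 'a \<Rightarrow> 'a \<Rightarrow> 'a" where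
  "sigma_prod X \<sigma> 0 x = id"
| "sigma_prod X \<sigma> (Suc m) x = \<sigma> x \<circ> sigma_prod X \<sigma> m (Dmap X \<sigma> x)"

definition class_prop :: "'a set \<Rightarrow> ('a \<Rightarrow> 'a \<Rightarrow> 'a) \<Rightarrow> nat \<Rightarrow> bool" where
  "class_prop X \<sigma> m \<longleftrightarrow> (\<forall>x\<in>X. \<forall>z\<in>X. sigma_prod X \<sigma> m x z = z)"

definition of_class :: "'a set \<Rightarrow> ('a \<Rightarrow> 'a \<Rightarrow> 'a) \<Rightarrow> ('a \<Rightarrow> 'a \<Rightarrow> 'a) \<Rightarrow> nat \<Rightarrow> bool" where
  "of_class X \<sigma> \<gamma> m \<longleftrightarrow> m \<ge> 1 \<and> class_prop X \<sigma> m \<and> (\<forall>j. 1 \<le> j \<and> j < m \<longrightarrow> \<not> class_prop X \<sigma> j)"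

definition condC :: "'a set \<Rightarrow> ('a \<Rightarrow> 'a \<Rightarrow> 'a) \<Rightarrow> 'a \<Rightarrow> bool" where
  "condC X \<sigma> x0 \<longleftrightarrow> (\<exists>l::nat. \<forall>s\<in>X. \<exists>is. length is = l \<and> set is \<subseteq> X \<and>
       foldr (\<lambda>i f. \<sigma> i \<circ> f) is id x0 = s)"

text \<open>A solution on X = {1..n} is given by (n, sigma, gamma). The symbol T_i^k
  (1 <= i,k <= n) is identified with the number (i-1)*n + k in {1..n^2}; in particular
  T_1^1 = 1.\<close>
definition Tsym :: "nat \<Rightarrow> nat \<Rightarrow> nat \<Rightarrow> nat" where
  "Tsym n i k = (i - 1) * n + k"

definition Tlow :: "nat \<Rightarrow> nat \<Rightarrow> nat" where
  "Tlow n t = (t - 1) div n + 1"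

definition Tup :: "nat \<Rightarrow> nat \<Rightarrow> nat" where
  "Tup n t = (t - 1) mod n + 1"

definition ind_sigma :: "nat \<Rightarrow> (nat \<Rightarrow> nat \<Rightarrow> nat) \<Rightarrow> nat \<Rightarrow> nat \<Rightarrow> nat" where
  "ind_sigma n \<sigma> t u = Tsym n (\<sigma> (Tlow n t) (Tlow n u)) (\<sigma> (Tup n t) (Tup n u))"

definition ind_gamma :: "nat \<Rightarrow> (nat \<Rightarrow> nat \<Rightarrow> nat) \<Rightarrow> nat \<Rightarrow> nat \<Rightarrow> nat" where
  "ind_gamma n \<gamma> u t = Tsym n (\<gamma> (Tlow n u) (Tlow n t)) (\<gamma> (Tup n u) (Tup n t))"

type_synonym nsol = "nat \<times> (nat \<Rightarrow> nat \<Rightarrow> nat) \<times> (nat \<Rightarrow> nat \<Rightarrow> nat)"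

definition induced :: "nsol \<Rightarrow> nsol" where
  "induced S = (case S of (n, \<sigma>, \<gamma>) \<Rightarrow> (n ^ 2, ind_sigma n \<sigma>, ind_gamma n \<gamma>))"

end

(* The induced pair is the product solution X x X, transported to {1..n^2} along (i, k) |-> T_i^k:
   g and f act coordinatewise. Hence being a non-degenerate involutive solution, the class and
   condition (C) pass from X to X x X coordinatewise, and a decomposition Y u Z of X yields the
   decomposition (Y x X) u (Z x X). Condition (C) forces indecomposability, since each part of a
   decomposition is stable under every sigma_x.

   For the retraction let x ~_0 y iff x = y, and x ~_(l+1) y iff sigma_x z ~_l sigma_y z for all z.
   For a finite non-degenerate involutive solution the l-th retraction is X / ~_l, because every ~_l
   is a congruence: the braid relation shows that each sigma_x reflects ~_(l+1), and a bijection of a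
   finite set that reflects a relation also preserves it. On X x X the relation ~_l is the product of
   the relations on X, so |Ret^l (X x X)| = |Ret^l X|^2, which transfers irretractability and the
   multipermutation level. *)

theory Submission
  imports Defs
begin

(* Otherwise simp turns {1..n} into {Suc 0..n} and the lemmas about {1..n} no longer apply. *)
declare One_nat_def [simp del]

lemma solution_closed:
  assumes "is_solution X \<sigma> \<gamma>" "x \<in> X" "y \<in> X"
  shows "\<sigma> x y \<in> X" "\<gamma> y x \<in> X"
  using assms unfolding is_solution_def rmap_def by auto

lemma solution_braid:
  assumes "is_solution X \<sigma> \<gamma>" "x \<in> X" "y \<in> X" "z \<in> X"
  shows "\<sigma> (\<sigma> x y) (\<sigma> (\<gamma> y x) z) = \<sigma> x (\<sigma> y z)"
    and "\<gamma> (\<sigma> (\<gamma> y x) z) (\<sigma> x y) = \<sigma> (\<gamma> (\<sigma> y z) x) (\<gamma> z y)"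
    and "\<gamma> z (\<gamma> y x) = \<gamma> (\<gamma> z y) (\<gamma> (\<sigma> y z) x)"
proof -
  have "r12 \<sigma> \<gamma> (r23 \<sigma> \<gamma> (r12 \<sigma> \<gamma> (x, y, z))) = r23 \<sigma> \<gamma> (r12 \<sigma> \<gamma> (r23 \<sigma> \<gamma> (x, y, z)))"
    using assms unfolding is_solution_def by blast
  then show "\<sigma> (\<sigma> x y) (\<sigma> (\<gamma> y x) z) = \<sigma> x (\<sigma> y z)"
    and "\<gamma> (\<sigma> (\<gamma> y x) z) (\<sigma> x y) = \<sigma> (\<gamma> (\<sigma> y z) x) (\<gamma> z y)"
    and "\<gamma> z (\<gamma> y x) = \<gamma> (\<gamma> z y) (\<gamma> (\<sigma> y z) x)"
    by (simp_all add: r12_def r23_def rmap_def)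
qed

lemma nd_inv_solution_sigma_closed:
  "nd_inv_solution X \<sigma> \<gamma> \<Longrightarrow> x \<in> X \<Longrightarrow> y \<in> X \<Longrightarrow> \<sigma> x y \<in> X"
  unfolding nd_inv_solution_def by (blast intro: solution_closed(1))

lemma involutiveD:
  assumes "involutive X \<sigma> \<gamma>" "x \<in> X" "y \<in> X"
  shows "\<sigma> (\<sigma> x y) (\<gamma> y x) = x" "\<gamma> (\<gamma> y x) (\<sigma> x y) = y"
  using assms unfolding involutive_def rmap_def by auto

lemma nd_invariant_subsetI:
  assumes "Y \<subseteq> X" "nd_inv_solution Y \<sigma> \<gamma>"
  shows "nd_invariant_subset X \<sigma> \<gamma> Y"
  using assms by (auto simp: nd_invariant_subset_def invariant_subset_def nd_inv_solution_def is_solution_def)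

lemma Dmap_in:
  assumes "nondegenerate X \<sigma> \<gamma>" "x \<in> X"
  shows "Dmap X \<sigma> x \<in> X" and "\<sigma> x (Dmap X \<sigma> x) = x"
  using assms unfolding Dmap_def nondegenerate_def
  by (metis bij_betw_def inv_into_into, metis bij_betw_def f_inv_into_f)

lemma sigma_prod_closed:
  assumes sol: "nd_inv_solution X \<sigma> \<gamma>" and "x \<in> X" "z \<in> X"
  shows "sigma_prod X \<sigma> m x z \<in> X"
  using assms(2)
proof (induction m arbitrary: x)
  case (Suc m)
  with sol show ?case
    by (auto simp: nd_inv_solution_def Dmap_in solution_closed)
qed (simp add: assms(3))

lemma foldr_sigma_in:
  assumes "set is \<subseteq> X" "x0 \<in> W" "\<forall>x\<in>X. \<forall>y\<in>W. \<sigma> x y \<in> W"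
  shows "foldr (\<lambda>i f. \<sigma> i \<circ> f) is id x0 \<in> W"
  using assms by (induction "is") auto

lemma nd_invariant_subset_sigma_closed:
  assumes sol: "nd_inv_solution X \<sigma> \<gamma>"
    and Y: "nd_invariant_subset X \<sigma> \<gamma> Y" and rest: "invariant_subset X \<sigma> \<gamma> (X - Y)"
    and x: "x \<in> X" and y: "y \<in> Y"
  shows "\<sigma> x y \<in> Y"
proof (cases "x \<in> Y")
  case True
  then show ?thesis using Y y by (auto simp: nd_invariant_subset_def invariant_subset_def rmap_def)
next
  case False
  have YX: "Y \<subseteq> X" using Y by (simp add: nd_invariant_subset_def invariant_subset_def)
  have "\<gamma> y x \<notin> Y"
  proof
    assume "\<gamma> y x \<in> Y"
    moreover have "\<gamma> y ` Y = Y" "inj_on (\<gamma> y) X"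
      using Y sol y YX
      by (auto simp: nd_invariant_subset_def nd_inv_solution_def nondegenerate_def bij_betw_def)
    ultimately obtain y' where "y' \<in> Y" "\<gamma> y y' = \<gamma> y x" by (metis imageE)
    with \<open>inj_on (\<gamma> y) X\<close> YX x have "y' = x" by (auto dest: inj_onD)
    with \<open>y' \<in> Y\<close> False show False by simp
  qed
  show ?thesis
  proof (rule ccontr)
    assume "\<sigma> x y \<notin> Y"
    moreover have "\<sigma> x y \<in> X" "\<gamma> y x \<in> X"
      using sol x y YX by (auto simp: nd_inv_solution_def solution_closed)
    ultimately have "rmap \<sigma> \<gamma> (\<sigma> x y, \<gamma> y x) \<in> (X - Y) \<times> (X - Y)"
      using rest \<open>\<gamma> y x \<notin> Y\<close> by (auto simp: invariant_subset_def)
    moreover have "rmap \<sigma> \<gamma> (\<sigma> x y, \<gamma> y x) = (x, y)"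
      using sol x y YX by (auto simp: nd_inv_solution_def rmap_def involutiveD)
    ultimately show False using y by simp
  qed
qed

lemma condC_imp_indecomposable:
  assumes sol: "nd_inv_solution X \<sigma> \<gamma>" and C: "condC X \<sigma> x0" and x0: "x0 \<in> X"
  shows "indecomposable X \<sigma> \<gamma>"
  unfolding indecomposable_def decomposable_def
proof (intro notI, elim exE conjE)
  fix Y Z assume YZ: "Y \<noteq> {}" "Z \<noteq> {}" "Y \<inter> Z = {}" "Y \<union> Z = X"
    and inv: "nd_invariant_subset X \<sigma> \<gamma> Y" "nd_invariant_subset X \<sigma> \<gamma> Z"
  have stable: "\<forall>x\<in>X. \<forall>y\<in>W. \<sigma> x y \<in> W"
    if "nd_invariant_subset X \<sigma> \<gamma> W" "nd_invariant_subset X \<sigma> \<gamma> (X - W)" for W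
    using nd_invariant_subset_sigma_closed[OF sol that(1)] that(2)
    unfolding nd_invariant_subset_def by blast
  have "X - Y = Z" "X - Z = Y" using YZ by auto
  then have stableY: "\<forall>x\<in>X. \<forall>y\<in>Y. \<sigma> x y \<in> Y" and stableZ: "\<forall>x\<in>X. \<forall>y\<in>Z. \<sigma> x y \<in> Z"
    using stable[of Y] stable[of Z] inv by simp_all
  have reach: "X \<subseteq> W" if "x0 \<in> W" "\<forall>x\<in>X. \<forall>y\<in>W. \<sigma> x y \<in> W" for W
  proof
    fix s assume "s \<in> X"
    then obtain "is" where "set is \<subseteq> X" "foldr (\<lambda>i f. \<sigma> i \<circ> f) is id x0 = s"
      using C unfolding condC_def by blast
    then show "s \<in> W" using foldr_sigma_in[OF _ that] by metis
  qed
  show False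
  proof (cases "x0 \<in> Y")
    case True
    then show False using reach[OF True stableY] YZ by blast
  next
    case False
    then have "x0 \<in> Z" using x0 YZ(4) by blast
    then show False using reach[OF _ stableZ] YZ by blast
  qed
qed

section \<open>Iterated retraction\<close>

lemma bij_betw_reflects_imp_preserves:
  assumes "finite X" "bij_betw f X X" and reflects: "\<forall>a\<in>X. \<forall>b\<in>X. P (f a) (f b) \<longrightarrow> P a b"
    and "a \<in> X" "b \<in> X" "P a b"
  shows "P (f a) (f b)"
proof -
  define R where "R = {p \<in> X \<times> X. case_prod P p}"
  have "finite R" using assms(1) by (simp add: R_def)
  have "R \<subseteq> map_prod f f ` R"
  proof
    fix p assume "p \<in> R"
    then have "fst p \<in> f ` X" "snd p \<in> f ` X"
      using assms(2) unfolding R_def bij_betw_def by auto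
    then obtain a' b' where "a' \<in> X" "b' \<in> X" "p = (f a', f b')"
      by (metis imageE prod.collapse)
    with \<open>p \<in> R\<close> reflects show "p \<in> map_prod f f ` R" unfolding R_def by auto
  qed
  moreover have "card (map_prod f f ` R) \<le> card R"
    using \<open>finite R\<close> by (rule card_image_le)
  ultimately have "R = map_prod f f ` R"
    using \<open>finite R\<close> by (intro card_seteq) auto
  moreover have "(a, b) \<in> R" using assms(4-6) by (simp add: R_def)
  ultimately have "(f a, f b) \<in> R" by (metis image_eqI map_prod_simp)
  then show ?thesis by (simp add: R_def)
qed

lemma card_image_eq_if_same_fibres:
  assumes "\<forall>x\<in>A. \<forall>y\<in>A. f x = f y \<longleftrightarrow> g x = g y"
  shows "card (f ` A) = card (g ` A)"
proof -
  define S where "S = (\<lambda>x. (f x, g x)) ` A"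
  have "inj_on fst S" "inj_on snd S" using assms by (auto simp: S_def inj_on_def)
  then have "card (fst ` S) = card (snd ` S)" by (simp add: card_image)
  moreover have "fst ` S = f ` A" "snd ` S = g ` A" by (auto simp: S_def image_image)
  ultimately show ?thesis by simp
qed

(* ret_equiv l X sigma is the relation ~_l; by Ret_iterate_quotient it identifies exactly the
   elements that coincide in the l-th retraction. *)
fun ret_equiv :: "nat \<Rightarrow> 'a set \<Rightarrow> ('a \<Rightarrow> 'a \<Rightarrow> 'a) \<Rightarrow> 'a \<Rightarrow> 'a \<Rightarrow> bool" where
  "ret_equiv 0 X \<sigma> x y \<longleftrightarrow> x = y"
| "ret_equiv (Suc l) X \<sigma> x y \<longleftrightarrow> (\<forall>z\<in>X. ret_equiv l X \<sigma> (\<sigma> x z) (\<sigma> y z))"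

lemma ret_equiv_refl: "ret_equiv l X \<sigma> x x"
  by (induction l arbitrary: x) auto

lemma ret_equiv_sym: "ret_equiv l X \<sigma> x y \<Longrightarrow> ret_equiv l X \<sigma> y x"
  by (induction l arbitrary: x y) auto

lemma ret_equiv_trans: "ret_equiv l X \<sigma> x y \<Longrightarrow> ret_equiv l X \<sigma> y z \<Longrightarrow> ret_equiv l X \<sigma> x z"
proof (induction l arbitrary: x y z)
  case (Suc l)
  then show ?case by simp (meson Suc.IH)
qed simp

lemma ret_equiv_Suc:
  assumes closed: "\<forall>x\<in>X. \<forall>y\<in>X. \<sigma> x y \<in> X"
  shows "x \<in> X \<Longrightarrow> y \<in> X \<Longrightarrow> ret_equiv l X \<sigma> x y \<Longrightarrow> ret_equiv (Suc l) X \<sigma> x y"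
proof (induction l arbitrary: x y)
  case 0
  then show ?case by (simp add: ret_equiv_refl)
next
  case (Suc l)
  then have "\<forall>z\<in>X. ret_equiv (Suc l) X \<sigma> (\<sigma> x z) (\<sigma> y z)" using closed by simp
  then show ?case by simp
qed

(* With v = sigma_x y and w = gamma_y x, the braid relation gives sigma_x o sigma_y = sigma_v o sigma_w
   and involutivity gives sigma_v w = x; comparing with the same identities for y' shows w' ~_l w. *)
lemma ret_equiv_Suc_reflect:
  assumes sol: "nd_inv_solution X \<sigma> \<gamma>"
    and level: "\<And>x y y'. x \<in> X \<Longrightarrow> y \<in> X \<Longrightarrow> y' \<in> X \<Longrightarrow>
      ret_equiv l X \<sigma> (\<sigma> x y) (\<sigma> x y') \<longleftrightarrow> ret_equiv l X \<sigma> y y'"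
    and xy: "x \<in> X" "y \<in> X" "y' \<in> X" and H: "ret_equiv (Suc l) X \<sigma> (\<sigma> x y) (\<sigma> x y')"
  shows "ret_equiv (Suc l) X \<sigma> y y'"
  unfolding ret_equiv.simps
proof
  fix z assume z: "z \<in> X"
  have is_sol: "is_solution X \<sigma> \<gamma>" and inv: "involutive X \<sigma> \<gamma>"
    using sol by (auto simp: nd_inv_solution_def)
  have closed: "\<forall>x\<in>X. \<forall>y\<in>X. \<sigma> x y \<in> X" "\<forall>x\<in>X. \<forall>y\<in>X. \<gamma> y x \<in> X"
    using solution_closed[OF is_sol] by blast+
  define v v' w w' where "v = \<sigma> x y" "v' = \<sigma> x y'" "w = \<gamma> y x" "w' = \<gamma> y' x"
  have mem: "v \<in> X" "v' \<in> X" "w \<in> X" "w' \<in> X"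
    using xy closed unfolding v_v'_w_w'_def by auto
  have mem_z: "\<sigma> w z \<in> X" "\<sigma> w' z \<in> X" "\<sigma> y z \<in> X" "\<sigma> y' z \<in> X"
    using mem xy z closed by auto
  have H': "ret_equiv l X \<sigma> (\<sigma> v u) (\<sigma> v' u)" if "u \<in> X" for u
    using H that unfolding v_v'_w_w'_def by simp
  have "\<sigma> v w = x" "\<sigma> v' w' = x"
    using involutiveD(1)[OF inv xy(1,2)] involutiveD(1)[OF inv xy(1,3)] unfolding v_v'_w_w'_def by simp_all
  then have "ret_equiv l X \<sigma> (\<sigma> v w') (\<sigma> v w)" using H'[OF mem(4)] by simp
  then have "ret_equiv l X \<sigma> w' w" using level[OF mem(1,4,3)] by simp
  then have "ret_equiv (Suc l) X \<sigma> w' w" using ret_equiv_Suc[OF closed(1) mem(4,3)] by simp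
  then have "ret_equiv l X \<sigma> (\<sigma> w' z) (\<sigma> w z)" using z by simp
  then have "ret_equiv l X \<sigma> (\<sigma> v (\<sigma> w' z)) (\<sigma> v (\<sigma> w z))"
    using level[OF mem(1) mem_z(2,1)] by simp
  moreover have "ret_equiv l X \<sigma> (\<sigma> v' (\<sigma> w' z)) (\<sigma> v (\<sigma> w' z))"
    using H'[OF mem_z(2)] by (rule ret_equiv_sym)
  ultimately have "ret_equiv l X \<sigma> (\<sigma> v' (\<sigma> w' z)) (\<sigma> v (\<sigma> w z))"
    by (rule ret_equiv_trans[rotated])
  moreover have "\<sigma> v (\<sigma> w z) = \<sigma> x (\<sigma> y z)" "\<sigma> v' (\<sigma> w' z) = \<sigma> x (\<sigma> y' z)"
    using solution_braid(1)[OF is_sol xy(1,2) z] solution_braid(1)[OF is_sol xy(1,3) z]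
    unfolding v_v'_w_w'_def by simp_all
  ultimately have "ret_equiv l X \<sigma> (\<sigma> x (\<sigma> y' z)) (\<sigma> x (\<sigma> y z))" by simp
  then have "ret_equiv l X \<sigma> (\<sigma> y' z) (\<sigma> y z)" using level[OF xy(1) mem_z(4,3)] by simp
  then show "ret_equiv l X \<sigma> (\<sigma> y z) (\<sigma> y' z)" by (rule ret_equiv_sym)
qed

lemma ret_equiv_sigma_iff:
  assumes sol: "nd_inv_solution X \<sigma> \<gamma>" and fin: "finite X"
  shows "x \<in> X \<Longrightarrow> y \<in> X \<Longrightarrow> y' \<in> X \<Longrightarrow>
    ret_equiv l X \<sigma> (\<sigma> x y) (\<sigma> x y') \<longleftrightarrow> ret_equiv l X \<sigma> y y'"
proof (induction l arbitrary: x y y')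
  case 0
  then show ?case
    using sol by (auto simp: nd_inv_solution_def nondegenerate_def bij_betw_def dest: inj_onD)
next
  case (Suc l)
  have reflect: "\<forall>a\<in>X. \<forall>b\<in>X. ret_equiv (Suc l) X \<sigma> (\<sigma> x a) (\<sigma> x b) \<longrightarrow> ret_equiv (Suc l) X \<sigma> a b"
    using ret_equiv_Suc_reflect[OF sol Suc.IH] Suc.prems(1) by blast
  have "bij_betw (\<sigma> x) X X"
    using sol Suc.prems(1) by (simp add: nd_inv_solution_def nondegenerate_def)
  then show ?case
    using bij_betw_reflects_imp_preserves[OF fin _ reflect, of y y'] reflect Suc.prems by blast
qed

lemma ret_equiv_sigma_cong:
  assumes sol: "nd_inv_solution X \<sigma> \<gamma>" and fin: "finite X"
    and mem: "x \<in> X" "x' \<in> X" "y \<in> X" "y' \<in> X"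
    and xx': "ret_equiv l X \<sigma> x x'" and yy': "ret_equiv l X \<sigma> y y'"
  shows "ret_equiv l X \<sigma> (\<sigma> x y) (\<sigma> x' y')"
proof -
  have closed: "\<forall>x\<in>X. \<forall>y\<in>X. \<sigma> x y \<in> X" using nd_inv_solution_sigma_closed[OF sol] by blast
  have "ret_equiv l X \<sigma> (\<sigma> x y) (\<sigma> x y')"
    using ret_equiv_sigma_iff[OF sol fin mem(1,3,4)] yy' by simp
  moreover have "ret_equiv l X \<sigma> (\<sigma> x y') (\<sigma> x' y')"
    using ret_equiv_Suc[OF closed mem(1,2) xx'] mem(4) by simp
  ultimately show ?thesis by (rule ret_equiv_trans)
qed

lemma ret_rep_in:
  assumes "x \<in> X"
  shows "ret_rep X \<sigma> x \<in> X" and "\<forall>z\<in>X. \<sigma> (ret_rep X \<sigma> x) z = \<sigma> x z"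
  using someI[of "\<lambda>y. y \<in> X \<and> (\<forall>z\<in>X. \<sigma> y z = \<sigma> x z)" x] assms
  unfolding ret_rep_def by auto

lemma ret_rep_eq_iff:
  assumes "x \<in> X" "y \<in> X"
  shows "ret_rep X \<sigma> x = ret_rep X \<sigma> y \<longleftrightarrow> (\<forall>z\<in>X. \<sigma> x z = \<sigma> y z)"
proof
  assume "ret_rep X \<sigma> x = ret_rep X \<sigma> y"
  then show "\<forall>z\<in>X. \<sigma> x z = \<sigma> y z" using ret_rep_in(2) assms by metis
next
  assume "\<forall>z\<in>X. \<sigma> x z = \<sigma> y z"
  then show "ret_rep X \<sigma> x = ret_rep X \<sigma> y" unfolding ret_rep_def by metis
qed

lemma ret_rep_idem: "x \<in> X \<Longrightarrow> ret_rep X \<sigma> (ret_rep X \<sigma> x) = ret_rep X \<sigma> x"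
  using ret_rep_eq_iff ret_rep_in by metis

lemma ret_rep_kernel:
  assumes closed: "\<forall>x\<in>X. \<forall>y\<in>X. \<sigma> x y \<in> X"
    and kernel: "\<forall>x\<in>X. \<forall>y\<in>X. \<pi> x = \<pi> y \<longleftrightarrow> ret_equiv l X \<sigma> x y"
    and hom: "\<forall>x\<in>X. \<forall>y\<in>X. \<tau> (\<pi> x) (\<pi> y) = \<pi> (\<sigma> x y)"
    and xy: "x \<in> X" "y \<in> X"
  shows "ret_rep (\<pi> ` X) \<tau> (\<pi> x) = ret_rep (\<pi> ` X) \<tau> (\<pi> y) \<longleftrightarrow> ret_equiv (Suc l) X \<sigma> x y"
proof -
  have "ret_rep (\<pi> ` X) \<tau> (\<pi> x) = ret_rep (\<pi> ` X) \<tau> (\<pi> y) \<longleftrightarrow> (\<forall>z\<in>X. \<tau> (\<pi> x) (\<pi> z) = \<tau> (\<pi> y) (\<pi> z))"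
    using ret_rep_eq_iff[of "\<pi> x" "\<pi> ` X" "\<pi> y" \<tau>] xy by auto
  also have "\<dots> \<longleftrightarrow> (\<forall>z\<in>X. ret_equiv l X \<sigma> (\<sigma> x z) (\<sigma> y z))"
    using xy hom kernel closed by simp
  finally show ?thesis by simp
qed

lemma ret_rep_hom:
  assumes sol: "nd_inv_solution X \<sigma> \<gamma>" and fin: "finite X"
    and kernel: "\<forall>x\<in>X. \<forall>y\<in>X. \<pi> x = \<pi> y \<longleftrightarrow> ret_equiv l X \<sigma> x y"
    and hom: "\<forall>x\<in>X. \<forall>y\<in>X. \<tau> (\<pi> x) (\<pi> y) = \<pi> (\<sigma> x y)"
    and xy: "x \<in> X" "y \<in> X"
  defines "\<rho> \<equiv> ret_rep (\<pi> ` X) \<tau>"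
  shows "\<rho> (\<tau> (\<rho> (\<pi> x)) (\<rho> (\<pi> y))) = \<rho> (\<pi> (\<sigma> x y))"
proof -
  have closed: "\<forall>x\<in>X. \<forall>y\<in>X. \<sigma> x y \<in> X" using nd_inv_solution_sigma_closed[OF sol] by blast
  note kernel_Suc = ret_rep_kernel[OF closed kernel hom, folded \<rho>_def]
  have rep: "\<exists>x'\<in>X. \<rho> (\<pi> x) = \<pi> x' \<and> ret_equiv (Suc l) X \<sigma> x' x" if x: "x \<in> X" for x
  proof -
    have "\<rho> (\<pi> x) \<in> \<pi> ` X" unfolding \<rho>_def using x by (intro ret_rep_in(1)) simp
    then obtain x' where x': "x' \<in> X" "\<rho> (\<pi> x) = \<pi> x'" by blast
    have "\<rho> (\<pi> x') = \<rho> (\<rho> (\<pi> x))" using x'(2) by simp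
    also have "\<dots> = \<rho> (\<pi> x)" unfolding \<rho>_def using x by (intro ret_rep_idem) simp
    finally show ?thesis using x' kernel_Suc[OF x'(1) x] by blast
  qed
  obtain x' y' where x': "x' \<in> X" "\<rho> (\<pi> x) = \<pi> x'" "ret_equiv (Suc l) X \<sigma> x' x"
    and y': "y' \<in> X" "\<rho> (\<pi> y) = \<pi> y'" "ret_equiv (Suc l) X \<sigma> y' y"
    using rep[OF xy(1)] rep[OF xy(2)] by blast
  have "ret_equiv (Suc l) X \<sigma> (\<sigma> x' y') (\<sigma> x y)"
    using ret_equiv_sigma_cong[OF sol fin x'(1) xy(1) y'(1) xy(2) x'(3) y'(3)] .
  then show ?thesis using kernel_Suc hom closed xy x' y' by simp
qed

lemma Ret_iterate_quotient:
  assumes sol: "nd_inv_solution X \<sigma> \<gamma>" and fin: "finite X"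
  shows "\<exists>\<pi>. fst ((Ret ^^ l) (X, \<sigma>, \<gamma>)) = \<pi> ` X
    \<and> (\<forall>x\<in>X. \<forall>y\<in>X. \<pi> x = \<pi> y \<longleftrightarrow> ret_equiv l X \<sigma> x y)
    \<and> (\<forall>x\<in>X. \<forall>y\<in>X. fst (snd ((Ret ^^ l) (X, \<sigma>, \<gamma>))) (\<pi> x) (\<pi> y) = \<pi> (\<sigma> x y))"
proof (induction l)
  case 0
  show ?case by (intro exI[of _ id]) simp
next
  case (Suc l)
  obtain Y \<tau> \<delta> where l: "(Ret ^^ l) (X, \<sigma>, \<gamma>) = (Y, \<tau>, \<delta>)" by (metis prod_cases3)
  obtain \<pi> where Y: "Y = \<pi> ` X"
    and kernel: "\<forall>x\<in>X. \<forall>y\<in>X. \<pi> x = \<pi> y \<longleftrightarrow> ret_equiv l X \<sigma> x y"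
    and hom: "\<forall>x\<in>X. \<forall>y\<in>X. \<tau> (\<pi> x) (\<pi> y) = \<pi> (\<sigma> x y)"
    using Suc.IH unfolding l by (elim exE conjE) simp
  have closed: "\<forall>x\<in>X. \<forall>y\<in>X. \<sigma> x y \<in> X" using nd_inv_solution_sigma_closed[OF sol] by blast
  have "(Ret ^^ Suc l) (X, \<sigma>, \<gamma>) = Ret (Y, \<tau>, \<delta>)" using l by simp
  also have "\<dots> = (ret_rep Y \<tau> ` Y, \<lambda>x y. ret_rep Y \<tau> (\<tau> x y), \<lambda>y x. ret_rep Y \<tau> (\<delta> y x))"
    by (simp add: Ret_def)
  finally show ?case
    using ret_rep_kernel[OF closed kernel hom] ret_rep_hom[OF sol fin kernel hom]
    by (intro exI[of _ "ret_rep Y \<tau> \<circ> \<pi>"]) (simp add: Y image_comp)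
qed

section \<open>The symbols T_i^k\<close>

lemma Tlow_Tsym [simp]:
  assumes "i \<in> {1..n}" "k \<in> {1..n}" shows "Tlow n (Tsym n i k) = i"
proof -
  obtain i' k' where "i = Suc i'" "k = Suc k'" "k' < n" using assms by (cases i; cases k) auto
  then show ?thesis by (simp add: Tlow_def Tsym_def)
qed

lemma Tup_Tsym [simp]:
  assumes "i \<in> {1..n}" "k \<in> {1..n}" shows "Tup n (Tsym n i k) = k"
proof -
  obtain i' k' where "i = Suc i'" "k = Suc k'" "k' < n" using assms by (cases i; cases k) auto
  then show ?thesis by (simp add: Tup_def Tsym_def)
qed

lemma Tsym_Tlow_Tup:
  assumes "t \<in> {1..n^2}" shows "Tsym n (Tlow n t) (Tup n t) = t"
  using assms div_mult_mod_eq[of "t - 1" n] by (simp add: Tsym_def Tlow_def Tup_def)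

lemma Tlow_in:
  assumes "t \<in> {1..n^2}" shows "Tlow n t \<in> {1..n}"
proof -
  have "t - 1 < n * n" using assms by (auto simp: power2_eq_square)
  then have "(t - 1) div n < n" by (simp add: less_mult_imp_div_less)
  then show ?thesis by (simp add: Tlow_def)
qed

lemma Tup_in:
  assumes "t \<in> {1..n^2}" shows "Tup n t \<in> {1..n}"
  using assms by (cases n) (auto simp: Tup_def Suc_le_eq)

lemma Tsym_in:
  assumes "i \<in> {1..n}" "k \<in> {1..n}" shows "Tsym n i k \<in> {1..n^2}"
proof -
  have "(i - 1) * n + k \<le> (n - 1) * n + n"
    using assms by (intro add_mono mult_right_mono) auto
  also have "\<dots> = n^2" using assms by (cases n) (auto simp: power2_eq_square)
  finally show ?thesis using assms by (simp add: Tsym_def)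
qed

lemma Tsym_eq_iff:
  assumes "i \<in> {1..n}" "k \<in> {1..n}" "j \<in> {1..n}" "l \<in> {1..n}"
  shows "Tsym n i k = Tsym n j l \<longleftrightarrow> i = j \<and> k = l"
  using assms by (metis Tlow_Tsym Tup_Tsym)

lemma inj_on_Tsym: "inj_on (\<lambda>(i, k). Tsym n i k) ({1..n} \<times> {1..n})"
  by (rule inj_onI) (auto simp: Tsym_eq_iff)

definition Tset :: "nat \<Rightarrow> nat set \<Rightarrow> nat set \<Rightarrow> nat set" where
  "Tset n A B = (\<lambda>(i, k). Tsym n i k) ` (A \<times> B)"

lemma Tsym_in_Tset: "i \<in> A \<Longrightarrow> k \<in> B \<Longrightarrow> Tsym n i k \<in> Tset n A B"
  unfolding Tset_def by force

lemma ball_Tset: "(\<forall>t\<in>Tset n A B. P t) \<longleftrightarrow> (\<forall>i\<in>A. \<forall>k\<in>B. P (Tsym n i k))"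
  unfolding Tset_def by auto

lemma Tset_full: "Tset n {1..n} {1..n} = {1..n^2}"
proof
  show "Tset n {1..n} {1..n} \<subseteq> {1..n^2}"
    unfolding Tset_def using Tsym_in by auto
  show "{1..n^2} \<subseteq> Tset n {1..n} {1..n}"
  proof
    fix t assume t: "t \<in> {1..n^2}"
    have "Tsym n (Tlow n t) (Tup n t) \<in> Tset n {1..n} {1..n}"
      using t by (intro Tsym_in_Tset Tlow_in Tup_in)
    then show "t \<in> Tset n {1..n} {1..n}" using Tsym_Tlow_Tup[OF t] by simp
  qed
qed

lemma ball_Tsym: "(\<forall>t\<in>{1..n^2}. P t) \<longleftrightarrow> (\<forall>i\<in>{1..n}. \<forall>k\<in>{1..n}. P (Tsym n i k))"
  using ball_Tset[of n "{1..n}" "{1..n}" P] unfolding Tset_full .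

lemma Tset_subset:
  assumes "A \<subseteq> {1..n}" "B \<subseteq> {1..n}" shows "Tset n A B \<subseteq> {1..n^2}"
proof -
  have "Tset n A B \<subseteq> Tset n {1..n} {1..n}"
    unfolding Tset_def using assms by (intro image_mono Sigma_mono)
  then show ?thesis unfolding Tset_full .
qed

lemma ind_gamma_eq_ind_sigma: "ind_gamma = ind_sigma"
  by (intro ext) (simp add: ind_gamma_def ind_sigma_def)

lemma ind_sigma_Tsym [simp]:
  assumes "i \<in> {1..n}" "k \<in> {1..n}" "j \<in> {1..n}" "l \<in> {1..n}"
  shows "ind_sigma n \<phi> (Tsym n i k) (Tsym n j l) = Tsym n (\<phi> i j) (\<phi> k l)"
  using assms by (simp add: ind_sigma_def)

lemma bij_betw_ind_sigma:
  assumes AB: "A \<subseteq> {1..n}" "B \<subseteq> {1..n}"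
    and bij: "\<forall>x\<in>A. bij_betw (\<phi> x) A A" "\<forall>x\<in>B. bij_betw (\<phi> x) B B"
    and u: "u \<in> Tset n A B"
  shows "bij_betw (ind_sigma n \<phi> u) (Tset n A B) (Tset n A B)"
proof -
  obtain i k where ik: "i \<in> A" "k \<in> B" "u = Tsym n i k"
    using u unfolding Tset_def by auto
  have maps: "\<phi> i ` A \<subseteq> A" "\<phi> k ` B \<subseteq> B" and inj: "inj_on (\<phi> i) A" "inj_on (\<phi> k) B"
    using bij ik by (auto simp: bij_betw_def)
  have u_on_Tsym: "ind_sigma n \<phi> u (Tsym n j l) = Tsym n (\<phi> i j) (\<phi> k l)"
    if "j \<in> A" "l \<in> B" for j l
    using that ik AB ind_sigma_Tsym[of i n k j l \<phi>] by blast
  have "ind_sigma n \<phi> u ` Tset n A B \<subseteq> Tset n A B"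
    unfolding image_subset_iff ball_Tset using maps by (auto simp: u_on_Tsym intro!: Tsym_in_Tset)
  moreover have "inj_on (ind_sigma n \<phi> u) (Tset n A B)"
  proof (rule inj_onI)
    fix t t' assume "t \<in> Tset n A B" "t' \<in> Tset n A B" "ind_sigma n \<phi> u t = ind_sigma n \<phi> u t'"
    then obtain j l j' l' where jl: "j \<in> A" "l \<in> B" "t = Tsym n j l" "j' \<in> A" "l' \<in> B" "t' = Tsym n j' l'"
      and "Tsym n (\<phi> i j) (\<phi> k l) = Tsym n (\<phi> i j') (\<phi> k l')"
      using u_on_Tsym unfolding Tset_def by auto
    moreover have "\<phi> i j \<in> {1..n}" "\<phi> k l \<in> {1..n}" "\<phi> i j' \<in> {1..n}" "\<phi> k l' \<in> {1..n}"
      using jl maps AB by blast+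
    ultimately have "\<phi> i j = \<phi> i j'" "\<phi> k l = \<phi> k l'" using Tsym_eq_iff by blast+
    then show "t = t'" using jl inj by (auto dest: inj_onD)
  qed
  moreover have "finite (Tset n A B)" using Tset_subset[OF AB] by (rule finite_subset) simp
  ultimately show ?thesis by (simp add: bij_betw_def endo_inj_surj)
qed

section \<open>The induced solution\<close>

lemma Tset_solution:
  assumes AB: "A \<subseteq> {1..n}" "B \<subseteq> {1..n}"
    and solA: "nd_inv_solution A \<sigma> \<gamma>" and solB: "nd_inv_solution B \<sigma> \<gamma>"
  shows "nd_inv_solution (Tset n A B) (ind_sigma n \<sigma>) (ind_gamma n \<gamma>)"
proof -
  have A: "is_solution A \<sigma> \<gamma>" "nondegenerate A \<sigma> \<gamma>" "involutive A \<sigma> \<gamma>"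
    and B: "is_solution B \<sigma> \<gamma>" "nondegenerate B \<sigma> \<gamma>" "involutive B \<sigma> \<gamma>"
    using solA solB by (auto simp: nd_inv_solution_def)
  note closed = solution_closed[OF A(1)] solution_closed[OF B(1)]
  have lift: "ind_sigma n \<phi> (Tsym n i k) (Tsym n j l) = Tsym n (\<phi> i j) (\<phi> k l)"
    if "i \<in> A" "k \<in> B" "j \<in> A" "l \<in> B" for \<phi> i k j l
    using that AB ind_sigma_Tsym[of i n k j l \<phi>] by blast
  have "is_solution (Tset n A B) (ind_sigma n \<sigma>) (ind_sigma n \<gamma>)"
    unfolding is_solution_def ball_Tset
  proof (intro conjI ballI)
    fix i k j l assume "i \<in> A" "k \<in> B" "j \<in> A" "l \<in> B"
    then show "rmap (ind_sigma n \<sigma>) (ind_sigma n \<gamma>) (Tsym n i k, Tsym n j l) \<in> Tset n A B \<times> Tset n A B"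
      by (simp add: rmap_def lift closed Tsym_in_Tset)
  next
    fix i k j l p q assume ijp: "i \<in> A" "j \<in> A" "p \<in> A" and klq: "k \<in> B" "l \<in> B" "q \<in> B"
    note braids = solution_braid[OF A(1) ijp] solution_braid[OF B(1) klq]
    from ijp klq show "r12 (ind_sigma n \<sigma>) (ind_sigma n \<gamma>) (r23 (ind_sigma n \<sigma>) (ind_sigma n \<gamma>)
        (r12 (ind_sigma n \<sigma>) (ind_sigma n \<gamma>) (Tsym n i k, Tsym n j l, Tsym n p q))) =
      r23 (ind_sigma n \<sigma>) (ind_sigma n \<gamma>) (r12 (ind_sigma n \<sigma>) (ind_sigma n \<gamma>)
        (r23 (ind_sigma n \<sigma>) (ind_sigma n \<gamma>) (Tsym n i k, Tsym n j l, Tsym n p q)))"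
      by (simp add: rmap_def r12_def r23_def lift closed braids)
  qed
  moreover have "involutive (Tset n A B) (ind_sigma n \<sigma>) (ind_sigma n \<gamma>)"
    unfolding involutive_def ball_Tset
    by (simp add: rmap_def lift closed involutiveD[OF A(3)] involutiveD[OF B(3)])
  moreover have "nondegenerate (Tset n A B) (ind_sigma n \<sigma>) (ind_sigma n \<gamma>)"
    using A(2) B(2) unfolding nondegenerate_def by (simp add: bij_betw_ind_sigma[OF AB])
  ultimately show ?thesis by (simp add: nd_inv_solution_def ind_gamma_eq_ind_sigma)
qed

lemma induced_solution:
  assumes "nd_inv_solution {1..n} \<sigma> \<gamma>"
  shows "nd_inv_solution {1..n^2} (ind_sigma n \<sigma>) (ind_gamma n \<gamma>)"
  using Tset_solution[OF order_refl order_refl assms assms] unfolding Tset_full .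

lemma decomposable_induced:
  assumes sol: "nd_inv_solution {1..n} \<sigma> \<gamma>" and dec: "decomposable {1..n} \<sigma> \<gamma>"
  shows "decomposable {1..n^2} (ind_sigma n \<sigma>) (ind_gamma n \<gamma>)"
proof -
  obtain Y Z where YZ: "Y \<noteq> {}" "Z \<noteq> {}" "Y \<inter> Z = {}" "Y \<union> Z = {1..n}"
    and inv: "nd_invariant_subset {1..n} \<sigma> \<gamma> Y" "nd_invariant_subset {1..n} \<sigma> \<gamma> Z"
    using dec unfolding decomposable_def by blast
  have sub: "Y \<subseteq> {1..n}" "Z \<subseteq> {1..n}" using YZ(4) by auto
  have "nd_invariant_subset {1..n^2} (ind_sigma n \<sigma>) (ind_gamma n \<gamma>) (Tset n W {1..n})"
    if "W \<subseteq> {1..n}" "nd_invariant_subset {1..n} \<sigma> \<gamma> W" for W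
    using that sol Tset_solution[OF that(1) order_refl _ sol] Tset_subset[OF that(1) order_refl]
    by (intro nd_invariant_subsetI) (auto simp: nd_invariant_subset_def)
  then have "nd_invariant_subset {1..n^2} (ind_sigma n \<sigma>) (ind_gamma n \<gamma>) (Tset n Y {1..n})"
    "nd_invariant_subset {1..n^2} (ind_sigma n \<sigma>) (ind_gamma n \<gamma>) (Tset n Z {1..n})"
    using sub inv by blast+
  moreover have "Tset n Y {1..n} \<noteq> {}" "Tset n Z {1..n} \<noteq> {}"
    using YZ sub by (auto simp: Tset_def)
  moreover have "Tset n Y {1..n} \<inter> Tset n Z {1..n} = Tset n (Y \<inter> Z) {1..n}"
    unfolding Tset_def Times_Int_distrib1
    using sub by (intro inj_on_image_Int[OF inj_on_Tsym, symmetric]) auto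
  then have "Tset n Y {1..n} \<inter> Tset n Z {1..n} = {}"
    using YZ(3) by (simp add: Tset_def)
  moreover have "Tset n Y {1..n} \<union> Tset n Z {1..n} = Tset n (Y \<union> Z) {1..n}"
    unfolding Tset_def Times_Un_distrib1 image_Un ..
  then have "Tset n Y {1..n} \<union> Tset n Z {1..n} = {1..n^2}"
    using YZ(4) Tset_full by simp
  ultimately show ?thesis unfolding decomposable_def by blast
qed

lemma Dmap_induced:
  assumes sol: "nd_inv_solution {1..n} \<sigma> \<gamma>" and ik: "i \<in> {1..n}" "k \<in> {1..n}"
  shows "Dmap {1..n^2} (ind_sigma n \<sigma>) (Tsym n i k) = Tsym n (Dmap {1..n} \<sigma> i) (Dmap {1..n} \<sigma> k)"
proof -
  have nd: "nondegenerate {1..n} \<sigma> \<gamma>" using sol by (simp add: nd_inv_solution_def)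
  note D = Dmap_in[OF nd ik(1)] Dmap_in[OF nd ik(2)]
  have "inj_on (ind_sigma n \<sigma> (Tsym n i k)) {1..n^2}"
    using induced_solution[OF sol] Tsym_in[OF ik]
    by (auto simp: nd_inv_solution_def nondegenerate_def bij_betw_def)
  moreover have "Tsym n (Dmap {1..n} \<sigma> i) (Dmap {1..n} \<sigma> k) \<in> {1..n^2}"
    using D by (intro Tsym_in)
  moreover have "ind_sigma n \<sigma> (Tsym n i k) (Tsym n (Dmap {1..n} \<sigma> i) (Dmap {1..n} \<sigma> k)) = Tsym n i k"
    using ik D by simp
  ultimately show ?thesis
    unfolding Dmap_def[of "{1..n^2}"] by (rule inv_into_f_eq)
qed

lemma sigma_prod_induced:
  assumes sol: "nd_inv_solution {1..n} \<sigma> \<gamma>"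
    and "i \<in> {1..n}" "k \<in> {1..n}" "j \<in> {1..n}" "l \<in> {1..n}"
  shows "sigma_prod {1..n^2} (ind_sigma n \<sigma>) m (Tsym n i k) (Tsym n j l)
    = Tsym n (sigma_prod {1..n} \<sigma> m i j) (sigma_prod {1..n} \<sigma> m k l)"
  using assms(2,3)
proof (induction m arbitrary: i k)
  case (Suc m)
  have nd: "nondegenerate {1..n} \<sigma> \<gamma>" using sol by (simp add: nd_inv_solution_def)
  note D = Dmap_in[OF nd Suc.prems(1)] Dmap_in[OF nd Suc.prems(2)]
  show ?case
    using Suc.prems assms(4,5) D sigma_prod_closed[OF sol D(1) assms(4)] sigma_prod_closed[OF sol D(3) assms(5)]
    by (simp add: Suc.IH[OF D(1,3)] Dmap_induced[OF sol])
qed simp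

lemma class_prop_induced:
  assumes sol: "nd_inv_solution {1..n} \<sigma> \<gamma>"
  shows "class_prop {1..n^2} (ind_sigma n \<sigma>) m = class_prop {1..n} \<sigma> m"
proof -
  have pointwise: "sigma_prod {1..n^2} (ind_sigma n \<sigma>) m (Tsym n i k) (Tsym n j l) = Tsym n j l
      \<longleftrightarrow> sigma_prod {1..n} \<sigma> m i j = j \<and> sigma_prod {1..n} \<sigma> m k l = l"
    if "i \<in> {1..n}" "k \<in> {1..n}" "j \<in> {1..n}" "l \<in> {1..n}" for i k j l
    using that sigma_prod_closed[OF sol, of i j m] sigma_prod_closed[OF sol, of k l m]
    by (simp add: sigma_prod_induced[OF sol] Tsym_eq_iff)
  have "class_prop {1..n^2} (ind_sigma n \<sigma>) m \<longleftrightarrow>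
      (\<forall>i\<in>{1..n}. \<forall>k\<in>{1..n}. \<forall>j\<in>{1..n}. \<forall>l\<in>{1..n}.
        sigma_prod {1..n} \<sigma> m i j = j \<and> sigma_prod {1..n} \<sigma> m k l = l)"
    unfolding class_prop_def ball_Tsym using pointwise by simp
  also have "\<dots> \<longleftrightarrow> class_prop {1..n} \<sigma> m"
    unfolding class_prop_def by blast
  finally show ?thesis .
qed

lemma of_class_induced:
  assumes "nd_inv_solution {1..n} \<sigma> \<gamma>"
  shows "of_class {1..n^2} (ind_sigma n \<sigma>) \<gamma>' m = of_class {1..n} \<sigma> \<gamma> m"
  unfolding of_class_def class_prop_induced[OF assms] ..

lemma foldr_induced:
  assumes sol: "nd_inv_solution {1..n} \<sigma> \<gamma>" and "length xs = length ks"
    and "set xs \<subseteq> {1..n}" "set ks \<subseteq> {1..n}" "x \<in> {1..n}" "y \<in> {1..n}"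
  shows "foldr (\<lambda>i f. ind_sigma n \<sigma> i \<circ> f) (map2 (Tsym n) xs ks) id (Tsym n x y)
      = Tsym n (foldr (\<lambda>i f. \<sigma> i \<circ> f) xs id x) (foldr (\<lambda>i f. \<sigma> i \<circ> f) ks id y)"
  using assms(2-4)
proof (induction xs ks rule: list_induct2)
  case (Cons a xs b ks)
  have closed: "\<forall>x\<in>{1..n}. \<forall>y\<in>{1..n}. \<sigma> x y \<in> {1..n}"
    using nd_inv_solution_sigma_closed[OF sol] by blast
  define F G where "F = foldr (\<lambda>i f. \<sigma> i \<circ> f) xs id x" and "G = foldr (\<lambda>i f. \<sigma> i \<circ> f) ks id y"
  have FG: "F \<in> {1..n}" "G \<in> {1..n}"
    unfolding F_def G_def using Cons.prems foldr_sigma_in[OF _ assms(5) closed] foldr_sigma_in[OF _ assms(6) closed]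
    by simp_all
  have "foldr (\<lambda>i f. ind_sigma n \<sigma> i \<circ> f) (map2 (Tsym n) (a # xs) (b # ks)) id (Tsym n x y)
      = ind_sigma n \<sigma> (Tsym n a b)
          (foldr (\<lambda>i f. ind_sigma n \<sigma> i \<circ> f) (map2 (Tsym n) xs ks) id (Tsym n x y))"
    by simp
  also have "\<dots> = ind_sigma n \<sigma> (Tsym n a b) (Tsym n F G)"
    using Cons.prems unfolding F_def G_def by (subst Cons.IH) auto
  also have "\<dots> = Tsym n (\<sigma> a F) (\<sigma> b G)" using Cons.prems FG by simp
  also have "\<dots> = Tsym n (foldr (\<lambda>i f. \<sigma> i \<circ> f) (a # xs) id x) (foldr (\<lambda>i f. \<sigma> i \<circ> f) (b # ks) id y)"
    unfolding F_def G_def by simp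
  finally show ?case .
qed simp

lemma condC_induced:
  assumes sol: "nd_inv_solution {1..n} \<sigma> \<gamma>" and C: "condC {1..n} \<sigma> 1"
  shows "condC {1..n^2} (ind_sigma n \<sigma>) 1"
proof (cases "n = 0")
  case False
  then have one: "1 \<in> {1..n}" "Tsym n 1 1 = 1" by (simp_all add: Tsym_def)
  obtain l where l: "\<forall>s\<in>{1..n}. \<exists>is. length is = l \<and> set is \<subseteq> {1..n} \<and>
      foldr (\<lambda>i f. \<sigma> i \<circ> f) is id 1 = s"
    using C unfolding condC_def by blast
  have "\<exists>is. length is = l \<and> set is \<subseteq> {1..n^2} \<and> foldr (\<lambda>i f. ind_sigma n \<sigma> i \<circ> f) is id 1 = s"
    if s: "s \<in> {1..n^2}" for s
  proof -
    obtain xs ks where xs: "length xs = l" "set xs \<subseteq> {1..n}" "foldr (\<lambda>i f. \<sigma> i \<circ> f) xs id 1 = Tlow n s"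
      and ks: "length ks = l" "set ks \<subseteq> {1..n}" "foldr (\<lambda>i f. \<sigma> i \<circ> f) ks id 1 = Tup n s"
      using l Tlow_in[OF s] Tup_in[OF s] by meson
    have "set (zip xs ks) \<subseteq> {1..n} \<times> {1..n}"
      using xs(2) ks(2) by (auto dest: set_zip_leftD set_zip_rightD)
    then have "set (map2 (Tsym n) xs ks) \<subseteq> Tset n {1..n} {1..n}"
      unfolding Tset_def by auto
    then have "set (map2 (Tsym n) xs ks) \<subseteq> {1..n^2}"
      unfolding Tset_full .
    moreover have "foldr (\<lambda>i f. ind_sigma n \<sigma> i \<circ> f) (map2 (Tsym n) xs ks) id 1 = s"
      using foldr_induced[OF sol _ xs(2) ks(2) one(1) one(1)] xs ks one Tsym_Tlow_Tup[OF s] by simp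
    ultimately show ?thesis using xs ks by (intro exI[of _ "map2 (Tsym n) xs ks"]) simp
  qed
  then show ?thesis unfolding condC_def by blast
qed (simp add: condC_def)

lemma ret_equiv_induced:
  assumes sol: "nd_inv_solution {1..n} \<sigma> \<gamma>"
  shows "i \<in> {1..n} \<Longrightarrow> k \<in> {1..n} \<Longrightarrow> j \<in> {1..n} \<Longrightarrow> m \<in> {1..n} \<Longrightarrow>
    ret_equiv l {1..n^2} (ind_sigma n \<sigma>) (Tsym n i k) (Tsym n j m)
      \<longleftrightarrow> ret_equiv l {1..n} \<sigma> i j \<and> ret_equiv l {1..n} \<sigma> k m"
proof (induction l arbitrary: i k j m)
  case 0
  then show ?case by (simp add: Tsym_eq_iff)
next
  case (Suc l)
  have closed: "\<sigma> x y \<in> {1..n}" if "x \<in> {1..n}" "y \<in> {1..n}" for x y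
    using nd_inv_solution_sigma_closed[OF sol that] .
  have "ret_equiv (Suc l) {1..n^2} (ind_sigma n \<sigma>) (Tsym n i k) (Tsym n j m) \<longleftrightarrow>
      (\<forall>a\<in>{1..n}. \<forall>b\<in>{1..n}. ret_equiv l {1..n} \<sigma> (\<sigma> i a) (\<sigma> j a) \<and> ret_equiv l {1..n} \<sigma> (\<sigma> k b) (\<sigma> m b))"
    unfolding ret_equiv.simps ball_Tsym using Suc closed by simp
  also have "\<dots> \<longleftrightarrow> ret_equiv (Suc l) {1..n} \<sigma> i j \<and> ret_equiv (Suc l) {1..n} \<sigma> k m"
    using Suc.prems by auto
  finally show ?case .
qed

lemma card_Ret_induced:
  assumes sol: "nd_inv_solution {1..n} \<sigma> \<gamma>"
  shows "card (fst ((Ret ^^ l) ({1..n^2}, ind_sigma n \<sigma>, ind_gamma n \<gamma>)))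
    = card (fst ((Ret ^^ l) ({1..n}, \<sigma>, \<gamma>))) ^ 2"
proof -
  obtain \<pi> where \<pi>: "fst ((Ret ^^ l) ({1..n}, \<sigma>, \<gamma>)) = \<pi> ` {1..n}"
    and kernel: "\<forall>x\<in>{1..n}. \<forall>y\<in>{1..n}. \<pi> x = \<pi> y \<longleftrightarrow> ret_equiv l {1..n} \<sigma> x y"
    using Ret_iterate_quotient[OF sol finite_atLeastAtMost, of l] by (elim exE conjE) blast
  obtain \<pi>2 where \<pi>2: "fst ((Ret ^^ l) ({1..n^2}, ind_sigma n \<sigma>, ind_gamma n \<gamma>)) = \<pi>2 ` {1..n^2}"
    and kernel2: "\<forall>x\<in>{1..n^2}. \<forall>y\<in>{1..n^2}. \<pi>2 x = \<pi>2 y \<longleftrightarrow> ret_equiv l {1..n^2} (ind_sigma n \<sigma>) x y"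
    using Ret_iterate_quotient[OF induced_solution[OF sol] finite_atLeastAtMost, of l] by (elim exE conjE) blast
  have "\<pi>2 ` {1..n^2} = (\<lambda>(i, k). \<pi>2 (Tsym n i k)) ` ({1..n} \<times> {1..n})"
    unfolding Tset_full[symmetric] Tset_def image_comp by (simp add: case_prod_beta comp_def)
  also have "card \<dots> = card (map_prod \<pi> \<pi> ` ({1..n} \<times> {1..n}))"
  proof (intro card_image_eq_if_same_fibres ballI)
    fix p q assume "p \<in> {1..n} \<times> {1..n}" "q \<in> {1..n} \<times> {1..n}"
    then obtain i k j m where pq: "p = (i, k)" "q = (j, m)"
      and ikjm: "i \<in> {1..n}" "k \<in> {1..n}" "j \<in> {1..n}" "m \<in> {1..n}" by blast
    have "\<pi>2 (Tsym n i k) = \<pi>2 (Tsym n j m) \<longleftrightarrow> ret_equiv l {1..n} \<sigma> i j \<and> ret_equiv l {1..n} \<sigma> k m"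
      using kernel2 Tsym_in[OF ikjm(1,2)] Tsym_in[OF ikjm(3,4)] ret_equiv_induced[OF sol ikjm] by simp
    also have "\<dots> \<longleftrightarrow> \<pi> i = \<pi> j \<and> \<pi> k = \<pi> m" using kernel ikjm by simp
    finally show "(\<lambda>(i, k). \<pi>2 (Tsym n i k)) p = (\<lambda>(i, k). \<pi>2 (Tsym n i k)) q
        \<longleftrightarrow> map_prod \<pi> \<pi> p = map_prod \<pi> \<pi> q"
      unfolding pq by simp
  qed
  also have "map_prod \<pi> \<pi> ` ({1..n} \<times> {1..n}) = \<pi> ` {1..n} \<times> \<pi> ` {1..n}"
    by (rule map_prod_surj_on) simp_all
  finally show ?thesis
    unfolding \<pi> \<pi>2 by (simp add: card_cartesian_product power2_eq_square)
qed

lemma induced_iterate: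
  assumes sol: "nd_inv_solution {1..n} \<sigma> \<gamma>" and "(induced ^^ k) (n, \<sigma>, \<gamma>) = (N, s, t)"
  shows "N = n ^ (2 ^ k) \<and> nd_inv_solution {1..N} s t \<and> (condC {1..n} \<sigma> 1 \<longrightarrow> condC {1..N} s 1)"
  using assms(2)
proof (induction k arbitrary: N s t)
  case 0
  then show ?case using sol by simp
next
  case (Suc k)
  obtain N' s' t' where k: "(induced ^^ k) (n, \<sigma>, \<gamma>) = (N', s', t')" by (metis prod_cases3)
  have "(N, s, t) = induced (N', s', t')" using Suc.prems k by simp
  then have Nst: "N = N'^2" "s = ind_sigma N' s'" "t = ind_gamma N' t'" by (simp_all add: induced_def)
  have IH: "N' = n ^ (2 ^ k)" "nd_inv_solution {1..N'} s' t'" "condC {1..n} \<sigma> 1 \<longrightarrow> condC {1..N'} s' 1"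
    using Suc.IH[OF k] by blast+
  have "N'^2 = n ^ (2 ^ Suc k)" using IH(1) by (simp add: power_mult[symmetric] mult.commute)
  then show ?case unfolding Nst using IH induced_solution condC_induced by blast
qed

lemma induced_iterate_indecomposable:
  assumes sol: "nd_inv_solution {1..n} \<sigma> \<gamma>" and C: "condC {1..n} \<sigma> 1"
    and k: "(induced ^^ k) (n, \<sigma>, \<gamma>) = (N, s, t)"
  shows "indecomposable {1..N} s t"
proof (cases "N = 0")
  case True
  then show ?thesis by (simp add: indecomposable_def decomposable_def)
next
  case False
  then show ?thesis
    using induced_iterate[OF sol k] C by (intro condC_imp_indecomposable[of _ _ t 1]) auto
qed

theorem theorem3p12:
  fixes n :: nat and \<sigma> \<gamma> :: "nat \<Rightarrow> nat \<Rightarrow> nat"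
  assumes sol: "nd_inv_solution {1..n} \<sigma> \<gamma>"
  defines "n2 \<equiv> fst (induced (n, \<sigma>, \<gamma>))"
      and "g \<equiv> fst (snd (induced (n, \<sigma>, \<gamma>)))"
      and "f \<equiv> snd (snd (induced (n, \<sigma>, \<gamma>)))"
  shows
    "(\<forall>k::nat. k \<ge> 1 \<longrightarrow>
        (case (induced ^^ k) (n, \<sigma>, \<gamma>) of (N, s, t) \<Rightarrow>
           N = n ^ (2 ^ k) \<and> nd_inv_solution {1..N} s t))
     \<and> (irretractable {1..n} \<sigma> \<gamma> \<longrightarrow> irretractable {1..n2} g f)
     \<and> (\<forall>l. mp_level {1..n} \<sigma> \<gamma> l \<longrightarrow> mp_level {1..n2} g f l)
     \<and> (decomposable {1..n} \<sigma> \<gamma> \<longrightarrow> decomposable {1..n2} g f)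
     \<and> (\<forall>m. of_class {1..n} \<sigma> \<gamma> m \<longrightarrow> of_class {1..n2} g f m)
     \<and> (indecomposable {1..n} \<sigma> \<gamma> \<and> condC {1..n} \<sigma> 1 \<longrightarrow>
          indecomposable {1..n2} g f \<and> condC {1..n2} g 1
          \<and> (\<forall>k::nat. k \<ge> 1 \<longrightarrow>
               (case (induced ^^ k) (n, \<sigma>, \<gamma>) of (N, s, t) \<Rightarrow>
                  N = n ^ (2 ^ k) \<and> indecomposable {1..N} s t)))"
proof -
  have "induced (n, \<sigma>, \<gamma>) = (n^2, ind_sigma n \<sigma>, ind_gamma n \<gamma>)" by (simp add: induced_def)
  then have n2: "n2 = n^2" and g: "g = ind_sigma n \<sigma>" and f: "f = ind_gamma n \<gamma>"
    and first: "(induced ^^ 1) (n, \<sigma>, \<gamma>) = (n2, g, f)"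
    unfolding n2_def g_def f_def by (simp_all add: One_nat_def)
  have card_iff: "card (fst ((Ret ^^ l) ({1..n2}, g, f))) = 1 \<longleftrightarrow> card (fst ((Ret ^^ l) ({1..n}, \<sigma>, \<gamma>))) = 1"
    for l
    unfolding n2 g f card_Ret_induced[OF sol] by (simp add: power2_eq_square)
  show ?thesis
    using induced_iterate[OF sol] induced_iterate_indecomposable[OF sol] induced_iterate_indecomposable[OF sol _ first]
      decomposable_induced[OF sol] of_class_induced[OF sol] condC_induced[OF sol] card_iff
    unfolding irretractable_def retractable_def mp_level_def n2 g f
    by (auto split: prod.split)
qed

end
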